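(* Let $a_1,\dots,a_n$ be a sequence of positive integers of one of the following eleven types: (1) $a_1$ with $a_1\ge2$; (2) $1,a_2$ with $a_2\ge2$; (3) $a_1,1$ with $a_1\ge2$; (4) $1,1,a_3$ with $a_3\ge2$; (5) $a_1,1,1$ with $a_1\ge2$; (6) $1,1,1,a_4$ with $a_4\ge2$; (7) $1,a_2,1,1$ with $a_2\ge2$; (8) $1,1,a_3,1$ with $a_3\ge2$; (9) $1,1,a_3,1,1$ with $a_3\ge2$; (10) $1,a_2,1,a_4,1$ with $a_2,a_4\ge2$; (11) $1,1,a_3,1,a_5,1$ with $a_3,a_5\ge2$. Let $T(0)=1$, $T(1)=a_1$, $T(i+1)=a_{i+1}T(i)+T(i-1)$. Then $V(a_1,\dots,a_n)\le T(n)$.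
   Context: $V(a_1,\dots,a_n)=\prod_{i=1}^n\frac{a_i+2}{2}$. *)

theory Defs
  imports Main "HOL.Real"
begin

text \<open>Sequences a_1..a_n are lists; a_i = a ! (i-1).\<close>

definition V :: "nat list \<Rightarrow> real" where
  "V a = (\<Prod>i<length a. (real (a ! i) + 2) / 2)"

fun T :: "nat list \<Rightarrow> nat \<Rightarrow> nat" where
  "T a 0 = 1"
| "T a (Suc 0) = a ! 0"
| "T a (Suc (Suc i)) = a ! (Suc i) * T a (Suc i) + T a i"

definition good_type :: "nat list \<Rightarrow> bool" where
  "good_type a \<longleftrightarrow>
     (\<exists>x y. x \<ge> 2 \<and> y \<ge> 2 \<and>
       (a = [x] \<or> a = [1,x] \<or> a = [x,1] \<or> a = [1,1,x] \<or> a = [x,1,1] \<or>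
        a = [1,1,1,x] \<or> a = [1,x,1,1] \<or> a = [1,1,x,1] \<or> a = [1,1,x,1,1] \<or>
        a = [1,x,1,y,1] \<or> a = [1,1,x,1,y,1]))"

end

theory Submission
  imports Defs
begin

lemma V_Nil [simp]: "V [] = 1"
  by (simp add: V_def)

lemma V_Cons [simp]: "V (c # a) = (real c + 2) / 2 * V a"
  unfolding V_def length_Cons prod.lessThan_Suc_shift by simp

text \<open>Expanding V and T turns each of the eleven cases into an inequality in x, y \<ge> 2 that is
  linear except for a multiple of x y whose net coefficient favours T, so linear arithmetic
  together with x y \<ge> 0 decides it.\<close>

theorem lemma3p4:
  fixes a :: "nat list"
  assumes "good_type a"
  shows "V a \<le> real (T a (length a))"
proof -
  obtain x y :: nat where "x \<ge> 2" "y \<ge> 2" and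
    "a = [x] \<or> a = [1,x] \<or> a = [x,1] \<or> a = [1,1,x] \<or> a = [x,1,1] \<or>
     a = [1,1,1,x] \<or> a = [1,x,1,1] \<or> a = [1,1,x,1] \<or> a = [1,1,x,1,1] \<or>
     a = [1,x,1,y,1] \<or> a = [1,1,x,1,y,1]"
    using assms unfolding good_type_def by blast
  then show ?thesis
    by (elim disjE; simp add: numeral_eq_Suc field_simps;
        use mult_nonneg_nonneg[of "real x" "real y"] in linarith)
qed

end
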